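(* Let $\Sigma$ be a finite set of tokens, let $q$ be a query, and let $\pi_\theta$, $\pi_{\theta_{old}}$, $\pi_{\theta_{ref}}$ be policies, i.e. conditional distributions assigning a positive probability $\pi(x \mid q, y)$ to each token $x\in\Sigma$ given $q$ and a prefix $y\in\Sigma^*$. Let $\mathbb{G}=(g_1,\dots,g_k)$ be a group of $k\ge 1$ nonempty trajectories $g_i\in\Sigma^*$ (e.g. sampled from $\pi_\theta(\cdot\mid q)$), with real outcome-level rewards $r_1,\dots,r_k$, and assume $r_{std}(\mathbb{G})\neq 0$. Then $$L_{GRPO}(\mathbb{G}) = L_{PRM}(\mathbb{G}),$$ where $$L_{GRPO}(\mathbb{G})=\frac{1}{\sum_{i=1}^k \mathrm{len}(g_i)}\sum_{i=1}^k\sum_{t=0}^{\mathrm{len}(g_i)-1}\big(P_{i,t}\, a_i - D_{i,t}\big),\qquad L_{PRM}(\mathbb{G})=\frac{1}{\sum_{i=1}^k \mathrm{len}(g_i)}\sum_{i=1}^k\sum_{t=0}^{\mathrm{len}(g_i)-1}\big(P_{i,t}\, A_{i,t} - D_{i,t}\big),$$ with all quantities as defined in the context.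
   Context: For a trajectory $g_i$, $\mathrm{len}(g_i)$ is its number of tokens, $g_i[t]$ (for $0\le t<\mathrm{len}(g_i)$) is its $t$-th token (0-indexed), and $g_i[:t]$ is the prefix consisting of its first $t$ tokens. $r_{mean}(\mathbb{G})=\frac1k\sum_{i=1}^k r_i$ and $r_{std}(\mathbb{G})$ is the standard deviation of $r_1,\dots,r_k$. The (outcome-level GRPO) advantage is $a_i=(r_i-r_{mean}(\mathbb{G}))/r_{std}(\mathbb{G})$. For $0\le t<\mathrm{len}(g_i)$: $P_{i,t}=\dfrac{\pi_\theta(g_i[t]\mid q,g_i[:t])}{\pi_{\theta_{old}}(g_i[t]\mid q,g_i[:t])}$ and $D_{i,t}=\dfrac{\pi_{\theta_{ref}}(g_i[t]\mid q,g_i[:t])}{\pi_\theta(g_i[t]\mid q,g_i[:t])}-\ln\dfrac{\pi_{\theta_{ref}}(g_i[t]\mid q,g_i[:t])}{\pi_\theta(g_i[t]\mid q,g_i[:t])}-1$. Process steps: the trajectories of $\mathbb{G}$ form a prefix tree whose nodes ("process sets") are sets of trajectories sharing a common prefix. For $0\le t<\mathrm{len}(g_i)$, the process set containing token $t$ of $g_i$ is $\lambda^{(i,t)}=\{g_j\in\mathbb{G} : \mathrm{len}(g_j)>t \text{ and } g_j[:t+1]=g_i[:t+1]\}$ (the set of trajectories that agree with $g_i$ on its first $t+1$ tokens). The step-level (Monte Carlo) reward of a process set $\lambda$ is $\hat R(\lambda)=\frac{1}{|\lambda|}\sum_{g_j\in\lambda} r_j$; the token-level reward is $R_{i,t}=\hat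 R(\lambda^{(i,t)})$, and the step-level advantage is $A_{i,t}=(R_{i,t}-r_{mean}(\mathbb{G}))/r_{std}(\mathbb{G})$. *)

theory Defs
  imports "HOL-Analysis.Analysis"
begin

text \<open>A policy: p q y x is the probability of next token x given query q and prefix y.\<close>
type_synonym ('q, 'a) policy = "'q \<Rightarrow> 'a list \<Rightarrow> 'a \<Rightarrow> real"

definition is_policy :: "'a set \<Rightarrow> ('q, 'a) policy \<Rightarrow> bool" where
  "is_policy \<Sigma> p \<longleftrightarrow>
     (\<forall>q y. set y \<subseteq> \<Sigma> \<longrightarrow> (\<forall>x\<in>\<Sigma>. p q y x > 0) \<and> (\<Sum>x\<in>\<Sigma>. p q y x) = 1)"

text \<open>Group G = (g_0,...,g_{k-1}) given by a function on indices below k (0-based).\<close>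
definition r_mean :: "nat \<Rightarrow> (nat \<Rightarrow> real) \<Rightarrow> real" where
  "r_mean k r = (\<Sum>i<k. r i) / real k"

definition r_std :: "nat \<Rightarrow> (nat \<Rightarrow> real) \<Rightarrow> real" where
  "r_std k r = sqrt ((\<Sum>i<k. (r i - r_mean k r)^2) / real k)"

definition adv :: "nat \<Rightarrow> (nat \<Rightarrow> real) \<Rightarrow> nat \<Rightarrow> real" where
  "adv k r i = (r i - r_mean k r) / r_std k r"

definition ratioP :: "('q, 'a) policy \<Rightarrow> ('q, 'a) policy \<Rightarrow> 'q \<Rightarrow> 'a list \<Rightarrow> nat \<Rightarrow> real" where
  "ratioP p_th p_old q gi t = p_th q (take t gi) (gi ! t) / p_old q (take t gi) (gi ! t)"

definition klD :: "('q, 'a) policy \<Rightarrow> ('q, 'a) policy \<Rightarrow> 'q \<Rightarrow> 'a list \<Rightarrow> nat \<Rightarrow> real" where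
  "klD p_th p_ref q gi t =
     (let z = p_ref q (take t gi) (gi ! t) / p_th q (take t gi) (gi ! t) in z - ln z - 1)"

definition process_set :: "nat \<Rightarrow> (nat \<Rightarrow> 'a list) \<Rightarrow> nat \<Rightarrow> nat \<Rightarrow> nat set" where
  "process_set k g i t =
     {j. j < k \<and> length (g j) > t \<and> take (t+1) (g j) = take (t+1) (g i)}"

definition step_reward :: "nat \<Rightarrow> (nat \<Rightarrow> 'a list) \<Rightarrow> (nat \<Rightarrow> real) \<Rightarrow> nat \<Rightarrow> nat \<Rightarrow> real" where
  "step_reward k g r i t =
     (let lam = process_set k g i t in (\<Sum>j\<in>lam. r j) / real (card lam))"

definition step_adv :: "nat \<Rightarrow> (nat \<Rightarrow> 'a list) \<Rightarrow> (nat \<Rightarrow> real) \<Rightarrow> nat \<Rightarrow> nat \<Rightarrow> real" where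
  "step_adv k g r i t = (step_reward k g r i t - r_mean k r) / r_std k r"

definition L_GRPO :: "('q, 'a) policy \<Rightarrow> ('q, 'a) policy \<Rightarrow> ('q, 'a) policy \<Rightarrow> 'q
    \<Rightarrow> nat \<Rightarrow> (nat \<Rightarrow> 'a list) \<Rightarrow> (nat \<Rightarrow> real) \<Rightarrow> real" where
  "L_GRPO p_th p_old p_ref q k g r =
     (1 / real (\<Sum>i<k. length (g i))) *
     (\<Sum>i<k. \<Sum>t<length (g i).
        ratioP p_th p_old q (g i) t * adv k r i - klD p_th p_ref q (g i) t)"

definition L_PRM :: "('q, 'a) policy \<Rightarrow> ('q, 'a) policy \<Rightarrow> ('q, 'a) policy \<Rightarrow> 'q
    \<Rightarrow> nat \<Rightarrow> (nat \<Rightarrow> 'a list) \<Rightarrow> (nat \<Rightarrow> real) \<Rightarrow> real" where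
  "L_PRM p_th p_old p_ref q k g r =
     (1 / real (\<Sum>i<k. length (g i))) *
     (\<Sum>i<k. \<Sum>t<length (g i).
        ratioP p_th p_old q (g i) t * step_adv k g r i t - klD p_th p_ref q (g i) t)"

end

theory Submission
  imports Defs
begin

text \<open>Index every token of the group by its position (i, t). The importance ratio at (i, t) only
  depends on the prefix-tree node g_i[:t+1], and the process set of (i, t) is exactly the fibre of
  that node, so the step-level reward is the mean of the outcome rewards over a fibre of a function
  on which the ratio is constant. Regrouping the ratio-weighted sum fibre by fibre therefore turns
  step-level rewards back into outcome rewards, and the two losses coincide.\<close>

definition fibre_mean :: "'i set \<Rightarrow> ('i \<Rightarrow> 'b) \<Rightarrow> ('i \<Rightarrow> real) \<Rightarrow> 'i \<Rightarrow> real" where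
  "fibre_mean S h f x = sum f {y \<in> S. h y = h x} / real (card {y \<in> S. h y = h x})"

text \<open>The tower property E[w E[f | h]] = E[w f] for w measurable with respect to h.\<close>

lemma sum_mult_fibre_mean:
  assumes "finite S"
    and w_fibre_const: "\<And>x y. x \<in> S \<Longrightarrow> y \<in> S \<Longrightarrow> h x = h y \<Longrightarrow> w x = w y"
  shows "(\<Sum>x\<in>S. w x * fibre_mean S h f x) = (\<Sum>x\<in>S. w x * f x)"
proof -
  let ?F = "\<lambda>v. {x \<in> S. h x = v}"
  have fibre: "(\<Sum>x\<in>?F v. w x * fibre_mean S h f x) = (\<Sum>x\<in>?F v. w x * f x)"
    if "v \<in> h ` S" for v
  proof -
    obtain x0 where x0: "x0 \<in> S" "h x0 = v" using \<open>v \<in> h ` S\<close> by blast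
    have card_pos: "card (?F v) > 0"
      using x0 \<open>finite S\<close> by (auto simp: card_gt_0_iff)
    have w_x0: "w x = w x0" if "x \<in> ?F v" for x
      using that x0 by (intro w_fibre_const) auto
    have mean_v: "fibre_mean S h f x = sum f (?F v) / card (?F v)" if "x \<in> ?F v" for x
      using that by (simp add: fibre_mean_def)
    have "(\<Sum>x\<in>?F v. w x * fibre_mean S h f x) = (\<Sum>x\<in>?F v. w x0 * (sum f (?F v) / card (?F v)))"
      using w_x0 mean_v by (intro sum.cong) simp_all
    also have "\<dots> = w x0 * sum f (?F v)"
      using card_pos by simp
    also have "\<dots> = (\<Sum>x\<in>?F v. w x * f x)"
      using w_x0 by (simp add: sum_distrib_left)
    finally show ?thesis .
  qed
  have "(\<Sum>x\<in>S. w x * fibre_mean S h f x) = (\<Sum>v\<in>h ` S. \<Sum>x\<in>?F v. w x * fibre_mean S h f x)"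
    using \<open>finite S\<close> by (rule sum.image_gen)
  also have "\<dots> = (\<Sum>v\<in>h ` S. \<Sum>x\<in>?F v. w x * f x)"
    using fibre by (rule sum.cong[OF refl])
  also have "\<dots> = (\<Sum>x\<in>S. w x * f x)"
    using \<open>finite S\<close> by (rule sum.image_gen[symmetric])
  finally show ?thesis .
qed

lemma sum_mult_diff_divide:
  fixes w a :: "'i \<Rightarrow> real"
  shows "(\<Sum>x\<in>T. w x * ((a x - m) / s)) = ((\<Sum>x\<in>T. w x * a x) - m * sum w T) / s"
proof -
  have "(\<Sum>x\<in>T. w x * ((a x - m) / s)) = (\<Sum>x\<in>T. (w x * a x - m * w x) / s)"
    by (simp add: algebra_simps)
  then show ?thesis
    by (simp add: sum_divide_distrib[symmetric] sum_subtractf sum_distrib_left)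
qed

definition tokens :: "nat \<Rightarrow> (nat \<Rightarrow> 'a list) \<Rightarrow> (nat \<times> nat) set" where
  "tokens k g = (SIGMA i:{..<k}. {..<length (g i)})"

definition prefix_node :: "(nat \<Rightarrow> 'a list) \<Rightarrow> nat \<times> nat \<Rightarrow> 'a list" where
  "prefix_node g p = take (snd p + 1) (g (fst p))"

lemma finite_tokens: "finite (tokens k g)"
  by (simp add: tokens_def)

lemma sum_tokens: "(\<Sum>i<k. \<Sum>t<length (g i). f i t) = (\<Sum>(i, t)\<in>tokens k g. f i t)"
  unfolding tokens_def by (simp add: sum.Sigma)

lemma prefix_node_eq_iff:
  assumes "(i, t) \<in> tokens k g" and "(j, s) \<in> tokens k g"
  shows "prefix_node g (j, s) = prefix_node g (i, t) \<longleftrightarrow>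
           s = t \<and> take (t + 1) (g j) = take (t + 1) (g i)"
proof -
  have "length (prefix_node g (j, s)) = s + 1" "length (prefix_node g (i, t)) = t + 1"
    using assms by (auto simp: tokens_def prefix_node_def)
  then show ?thesis
    by (metis add_right_cancel prefix_node_def fst_conv snd_conv)
qed

lemma process_set_eq_fibre:
  assumes "(i, t) \<in> tokens k g"
  shows "{p \<in> tokens k g. prefix_node g p = prefix_node g (i, t)} = (\<lambda>j. (j, t)) ` process_set k g i t"
  using prefix_node_eq_iff[OF assms]
  by (fastforce simp: process_set_def tokens_def)

lemma step_reward_eq_fibre_mean:
  assumes "(i, t) \<in> tokens k g"
  shows "step_reward k g r i t = fibre_mean (tokens k g) (prefix_node g) (r \<circ> fst) (i, t)"
proof -
  have "inj_on (\<lambda>j. (j, t)) (process_set k g i t)"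
    by (rule inj_onI) simp
  then show ?thesis
    by (simp add: step_reward_def Let_def fibre_mean_def process_set_eq_fibre[OF assms] sum.reindex
        card_image)
qed

lemma ratioP_eq_if_same_prefix_node:
  assumes "(i, t) \<in> tokens k g" and "(j, s) \<in> tokens k g"
    and "prefix_node g (i, t) = prefix_node g (j, s)"
  shows "ratioP p p' q (g i) t = ratioP p p' q (g j) s"
proof -
  have "s = t" and node: "take (t + 1) (g j) = take (t + 1) (g i)"
    using prefix_node_eq_iff[OF assms(1,2)] assms(3) by auto
  have "take t (g j) = take t (g i)"
    using arg_cong[OF node, of "take t"] by (simp add: min_def)
  moreover have "g j ! t = g i ! t"
    using arg_cong[OF node, of "\<lambda>u. u ! t"] by simp
  ultimately show ?thesis
    using \<open>s = t\<close> by (simp add: ratioP_def)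
qed

theorem theorem1:
  fixes \<Sigma> :: "'a set"
    and p_th p_old p_ref :: "('q, 'a) policy"
    and q :: 'q
    and k :: nat
    and g :: "nat \<Rightarrow> 'a list"
    and r :: "nat \<Rightarrow> real"
  assumes "finite \<Sigma>"
    and "is_policy \<Sigma> p_th" and "is_policy \<Sigma> p_old" and "is_policy \<Sigma> p_ref"
    and "k \<ge> 1"
    and "\<forall>i<k. g i \<noteq> [] \<and> set (g i) \<subseteq> \<Sigma>"
    and "r_std k r \<noteq> 0"
  shows "L_GRPO p_th p_old p_ref q k g r = L_PRM p_th p_old p_ref q k g r"
proof -
  define T where "T = tokens k g"
  define P where "P = (\<lambda>(i, t). ratioP p_th p_old q (g i) t)"
  have "(\<Sum>(i, t)\<in>T. P (i, t) * step_reward k g r i t)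
      = (\<Sum>x\<in>T. P x * fibre_mean T (prefix_node g) (r \<circ> fst) x)"
    by (rule sum.cong) (auto simp: T_def step_reward_eq_fibre_mean)
  also have "\<dots> = (\<Sum>x\<in>T. P x * (r \<circ> fst) x)"
    unfolding T_def P_def
    by (rule sum_mult_fibre_mean[OF finite_tokens]) (auto intro: ratioP_eq_if_same_prefix_node)
  finally have "(\<Sum>(i, t)\<in>T. P (i, t) * step_reward k g r i t) = (\<Sum>(i, t)\<in>T. P (i, t) * r i)"
    by (simp add: case_prod_beta')
  then have "(\<Sum>(i, t)\<in>T. P (i, t) * step_adv k g r i t) = (\<Sum>(i, t)\<in>T. P (i, t) * adv k r i)"
    using sum_mult_diff_divide[of P "\<lambda>(i, t). step_reward k g r i t"]
      sum_mult_diff_divide[of P "\<lambda>(i, t). r i"]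
    by (simp add: step_adv_def adv_def case_prod_beta')
  then show ?thesis
    unfolding L_GRPO_def L_PRM_def sum_tokens T_def P_def
    by (simp add: sum_subtractf case_prod_beta')
qed

end
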